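(* Let $s\ge 2$. As $z\to\infty$, $$\sum_{\omega\in\Omega_z}P(E_\omega)\sim \lambda_s,\qquad \lambda_s=\frac{\Gamma^s(1/s)}{s!\,s^s}.$$
   Context: Let $A\subseteq\{1,2,\dots\}$ be a random set in which the events $\{n\in A\}$ are mutually independent with $P(n\in A)=\frac1s n^{-1+1/s}$. For a finite set $\omega$ of distinct positive integers, $E_\omega$ is the event $\{\omega\subseteq A\}$ (so $P(E_\omega)=\prod_{x\in\omega}\frac1s x^{-1+1/s}$). For $\omega=\{x_1,\dots,x_r\}$ define $\sigma(\omega)=\{a_1x_1+\cdots+a_rx_r: a_1+\cdots+a_r=s,\ a_i\ge1 \text{ integers}\}$, the integers expressible as a sum of $s$ integers using each of $x_1,\dots,x_r$ at least once. For an integer $z$, $\Omega_z=\{\omega: z\in\sigma(\omega)\}$. $\Gamma$ is Euler's Gamma function. *)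

theory Defs
  imports "HOL-Analysis.Analysis" "HOL-Library.Landau_Symbols"
begin

definition sigma :: "nat \<Rightarrow> nat set \<Rightarrow> nat set" where
  "sigma s w = {z. \<exists>a :: nat \<Rightarrow> nat. (\<forall>x\<in>w. a x \<ge> 1) \<and> (\<Sum>x\<in>w. a x) = s
                     \<and> z = (\<Sum>x\<in>w. a x * x)}"

definition Omega :: "nat \<Rightarrow> nat \<Rightarrow> nat set set" where
  "Omega s z = {w. finite w \<and> 0 \<notin> w \<and> z \<in> sigma s w}"

definition PE :: "nat \<Rightarrow> nat set \<Rightarrow> real" where
  "PE s w = (\<Prod>x\<in>w. (1 / real s) * real x powr (-1 + 1 / real s))"

definition lambda_s :: "nat \<Rightarrow> real" where
  "lambda_s s = Gamma (1 / real s) ^ s / (fact s * real s ^ s)"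

end

theory Submission
  imports Defs "HOL-Combinatorics.Multiset_Permutations"
begin

text \<open>
  Put \<alpha> = 1/s and let T_k(z) be the sum of \<Prod> x_i^(\<alpha>-1) over the compositions
  z = x_1 + ... + x_k into positive parts. The sets \<omega> \<in> \<Omega>_z with |\<omega>| = s are exactly the part
  sets of the compositions of z into s distinct parts, each met s! times, so they contribute
  s^(-s)/s! times T_s(z) minus the compositions with a repeated part. Those compositions, and the
  sets with |\<omega>| < s (turned into compositions with the parts a_x x), contribute O(\<Sum>_(r<s) T_r(z)).

  Comparing T_(k+1)(z) = \<Sum>_x x^(\<alpha>-1) T_k(z - x) with Riemann sums of the Beta integral, which
  converge because the Beta kernel is convex when both exponents are at most 1, gives
  T_k(z) \<sim> \<Gamma>(\<alpha>)^k / \<Gamma>(k\<alpha>) z^(k\<alpha>-1) for k\<alpha> \<le> 1. Hence T_s(z) \<rightarrow> \<Gamma>(\<alpha>)^s, while T_r(z) \<rightarrow> 0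
  for r < s.
\<close>

definition beta_kernel :: "real \<Rightarrow> real \<Rightarrow> real \<Rightarrow> real" where
  "beta_kernel a b t = t powr (a - 1) * (1 - t) powr (b - 1)"

lemma has_integral_beta_kernel:
  "0 < a \<Longrightarrow> 0 < b \<Longrightarrow> (beta_kernel a b has_integral Beta a b) {0..1}"
  unfolding beta_kernel_def[abs_def] by (rule has_integral_Beta_real) auto

lemma beta_kernel_nonneg: "0 \<le> beta_kernel a b t"
  by (simp add: beta_kernel_def)

lemma convex_on_exp_comp:
  assumes "convex_on S \<phi>"
  shows "convex_on S (\<lambda>x. exp (\<phi> x))"
proof (rule convex_onI)
  fix t :: real and x y assume t: "0 < t" "t < 1" and xy: "x \<in> S" "y \<in> S"
  have "exp (\<phi> ((1 - t) *\<^sub>R x + t *\<^sub>R y)) \<le> exp ((1 - t) * \<phi> x + t * \<phi> y)"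
    using convex_onD[OF assms, of t x y] t xy by simp
  also have "\<dots> \<le> (1 - t) * exp (\<phi> x) + t * exp (\<phi> y)"
    using convex_onD[OF exp_convex, of t "\<phi> x" "\<phi> y"] t by simp
  finally show "exp (\<phi> ((1 - t) *\<^sub>R x + t *\<^sub>R y)) \<le> (1 - t) * exp (\<phi> x) + t * exp (\<phi> y)" .
qed (use convex_on_imp_convex[OF assms] in simp)

lemma convex_on_beta_kernel:
  assumes "a \<le> 1" "b \<le> 1"
  shows "convex_on {0<..<1} (beta_kernel a b)"
proof -
  define \<phi> where "\<phi> t = (a - 1) * ln t + (b - 1) * ln (1 - t)" for t
  have "convex_on {0<..<1} \<phi>"
  proof (rule convex_onI)
    fix t x y :: real assume t: "0 < t" "t < 1" and xy: "x \<in> {0<..<1}" "y \<in> {0<..<1}"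
    have "(1 - t) * ln x + t * ln y \<le> ln ((1 - t) * x + t * y)"
      using concave_onD[OF ln_concave, of t x y] t xy by simp
    hence "(a - 1) * ln ((1 - t) * x + t * y) \<le> (a - 1) * ((1 - t) * ln x + t * ln y)"
      using assms by (intro mult_left_mono_neg) auto
    moreover have "(1 - t) * ln (1 - x) + t * ln (1 - y) \<le> ln (1 - ((1 - t) * x + t * y))"
      using concave_onD[OF ln_concave, of t "1 - x" "1 - y"] t xy by (simp add: algebra_simps)
    hence "(b - 1) * ln (1 - ((1 - t) * x + t * y))
        \<le> (b - 1) * ((1 - t) * ln (1 - x) + t * ln (1 - y))"
      using assms by (intro mult_left_mono_neg) auto
    ultimately show "\<phi> ((1 - t) *\<^sub>R x + t *\<^sub>R y) \<le> (1 - t) * \<phi> x + t * \<phi> y"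
      unfolding \<phi>_def by (simp add: algebra_simps)
  qed simp
  hence exp_\<phi>_convex: "convex_on {0<..<1} (\<lambda>t. exp (\<phi> t))" by (rule convex_on_exp_comp)
  have kernel_eq: "beta_kernel a b t = exp (\<phi> t)" if "t \<in> {0<..<1}" for t :: real
    using that by (simp add: beta_kernel_def \<phi>_def powr_def exp_add)
  show ?thesis
  proof (rule convex_onI)
    fix t x y :: real assume t: "0 < t" "t < 1" and xy: "x \<in> {0<..<1}" "y \<in> {0<..<1}"
    have "(1 - t) *\<^sub>R x + t *\<^sub>R y \<in> {0<..<1}"
      using t xy by (intro convexD) auto
    with convex_onD[OF exp_\<phi>_convex, of t x y] t xy
    show "beta_kernel a b ((1 - t) *\<^sub>R x + t *\<^sub>R y)
        \<le> (1 - t) * beta_kernel a b x + t * beta_kernel a b y"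
      by (simp add: kernel_eq)
  qed simp
qed

lemma has_integral_reflect_Icc:
  fixes f :: "real \<Rightarrow> real"
  assumes "(f has_integral I) {u..v}"
  shows "((\<lambda>t. f (u + v - t)) has_integral I) {u..v}"
proof -
  have "((f \<circ> (+) (u + v)) has_integral I) {-v..-u}"
    using has_integral_shift_Icc_real[of f "u + v" I "-v" "-u"] assms by simp
  hence "((\<lambda>t. (f \<circ> (+) (u + v)) (- t)) has_integral I) {- (-u)..- (-v)}"
    by (subst has_integral_reflect_real) simp
  thus ?thesis by (simp add: o_def algebra_simps)
qed

lemma has_integral_symmetrize_Icc:
  fixes f :: "real \<Rightarrow> real"
  assumes "f integrable_on {u..v}"
  shows "((\<lambda>t. f t + f (u + v - t)) has_integral 2 * integral {u..v} f) {u..v}"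
  using has_integral_add[OF integrable_integral[OF assms]
      has_integral_reflect_Icc[OF integrable_integral[OF assms]]]
  by simp

lemma convex_on_midpoint_le_integral:
  fixes f :: "real \<Rightarrow> real"
  assumes "convex_on {u..v} f" "f integrable_on {u..v}" "u \<le> v"
  shows "(v - u) * f ((u + v) / 2) \<le> integral {u..v} f"
proof -
  have "2 * f ((u + v) / 2) \<le> f t + f (u + v - t)" if "t \<in> {u..v}" for t
  proof -
    have mid: "(1 - 1/2) *\<^sub>R t + (1/2) *\<^sub>R (u + v - t) = (u + v) / 2"
      by (simp add: field_simps)
    show ?thesis
      using convex_onD[OF assms(1), of "1/2" t "u + v - t"] that unfolding mid by simp
  qed
  hence "(v - u) * (2 * f ((u + v) / 2)) \<le> 2 * integral {u..v} f"
    using has_integral_le[OF has_integral_const_real has_integral_symmetrize_Icc[OF assms(2)]]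
      assms(3) by simp
  thus ?thesis by simp
qed

lemma convex_on_integral_le_trapezoid:
  fixes f :: "real \<Rightarrow> real"
  assumes "convex_on {u..v} f" "f integrable_on {u..v}" "u \<le> v"
  shows "integral {u..v} f \<le> (v - u) * (f u + f v) / 2"
proof (cases "u = v")
  case False
  hence d: "v - u > 0" using assms(3) by simp
  have "f t + f (u + v - t) \<le> f u + f v" if t: "t \<in> {u..v}" for t
  proof -
    have "f t \<le> (f v - f u) / (v - u) * (t - u) + f u"
      using convex_onD_Icc'[OF assms(1) t] by simp
    moreover have "f (u + v - t) \<le> (f v - f u) / (v - u) * (v - t) + f u"
      using convex_onD_Icc'[OF assms(1), of "u + v - t"] t by simp
    moreover have "(f v - f u) / (v - u) * (t - u) + (f v - f u) / (v - u) * (v - t)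
        = (f v - f u) / (v - u) * (v - u)"
      unfolding distrib_left[symmetric] by simp
    moreover have "(f v - f u) / (v - u) * (v - u) = f v - f u"
      using d by simp
    ultimately show ?thesis by linarith
  qed
  hence "2 * integral {u..v} f \<le> (v - u) * (f u + f v)"
    using has_integral_le[OF has_integral_symmetrize_Icc[OF assms(2)] has_integral_const_real]
      assms(3) by simp
  thus ?thesis by simp
qed simp

lemma integral_equal_cells:
  fixes f :: "real \<Rightarrow> real"
  assumes "f integrable_on {u + real m * h .. u + real n * h}" "m \<le> n" "0 \<le> h"
  shows "integral {u + real m * h .. u + real n * h} f
       = (\<Sum>k=m..<n. integral {u + real k * h .. u + real (k + 1) * h} f)"
  using assms
proof (induction n)
  case (Suc n)
  show ?case
  proof (cases "m = Suc n")
    case False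
    hence mn: "m \<le> n" using Suc by simp
    have le1: "u + real m * h \<le> u + real n * h"
      using mn Suc.prems by (intro add_left_mono mult_right_mono) auto
    have le2: "u + real n * h \<le> u + real (Suc n) * h"
      using Suc.prems by (intro add_left_mono mult_right_mono) auto
    have "f integrable_on {u + real m * h .. u + real n * h}"
      by (rule integrable_subinterval_real[OF Suc.prems(1)]) (use le2 in auto)
    with Suc.IH mn Suc.prems(3)
    show ?thesis
      using Henstock_Kurzweil_Integration.integral_combine[OF le1 le2 Suc.prems(1)] mn
      by (simp add: add.commute)
  qed simp
qed simp

lemma convex_riemann_sum_le_integral:
  fixes f :: "real \<Rightarrow> real"
  assumes convex: "convex_on {0<..<1} f" and int: "f integrable_on {0..1}"
    and nonneg: "\<And>t. t \<in> {0..1} \<Longrightarrow> 0 \<le> f t" and n: "1 \<le> n"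
  shows "(\<Sum>k=1..<n. f (real k / real n)) / real n \<le> integral {0..1} f"
proof -
  define h where "h = 1 / real n"
  define u where "u = - h / 2" \<comment> \<open>the cells have width h and midpoints k/n\<close>
  have h: "h > 0" using n by (simp add: h_def)
  have sub: "{u + real 1 * h .. u + real n * h} \<subseteq> {0..1}"
    using n by (auto simp: u_def h_def field_simps)
  have int_sub: "f integrable_on {u + real 1 * h .. u + real n * h}"
    by (rule integrable_subinterval_real[OF int sub])
  have cell: "h * f (real k / real n) \<le> integral {u + real k * h .. u + real (k + 1) * h} f"
    if k: "k \<in> {1..<n}" for k
  proof -
    have kn: "1 \<le> real k" "real k + 1 \<le> real n" using k by auto
    have ends: "u + real k * h = (real k - 1/2) / real n"
      "u + real (k + 1) * h = (real k + 1/2) / real n"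
      by (simp_all add: u_def h_def field_split_simps)
    have lo: "0 < u + real k * h"
      unfolding ends(1) using kn by (intro divide_pos_pos) auto
    have hi: "u + real (k + 1) * h < 1"
      unfolding ends(2) using kn by (simp add: divide_less_eq)
    have "convex_on {u + real k * h .. u + real (k + 1) * h} f"
      by (rule convex_on_subset[OF convex]) (use lo hi in auto)
    moreover have "f integrable_on {u + real k * h .. u + real (k + 1) * h}"
      by (rule integrable_subinterval_real[OF int]) (use lo hi in auto)
    moreover have "u + real k * h \<le> u + real (k + 1) * h" using h by simp
    moreover have "(u + real k * h + (u + real (k + 1) * h)) / 2 = real k / real n"
      unfolding ends by (simp add: field_split_simps)
    ultimately show ?thesis
      using convex_on_midpoint_le_integral by (fastforce simp: algebra_simps)
  qed
  have "(\<Sum>k=1..<n. f (real k / real n)) / real n = (\<Sum>k=1..<n. h * f (real k / real n))"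
    by (simp add: h_def sum_divide_distrib)
  also have "\<dots> \<le> (\<Sum>k=1..<n. integral {u + real k * h .. u + real (k + 1) * h} f)"
    by (rule sum_mono) (rule cell)
  also have "\<dots> = integral {u + real 1 * h .. u + real n * h} f"
    using integral_equal_cells[OF int_sub] n h by simp
  also have "\<dots> \<le> integral {0..1} f"
    by (rule integral_subset_le[OF sub int_sub int]) (use nonneg in auto)
  finally show ?thesis .
qed

lemma integral_le_convex_riemann_sum:
  fixes f :: "real \<Rightarrow> real"
  assumes convex: "convex_on {0<..<1} f" and int: "f integrable_on {0..1}"
    and nonneg: "\<And>t. t \<in> {0..1} \<Longrightarrow> 0 \<le> f t" and n: "2 \<le> n"
  shows "integral {1 / real n .. 1 - 1 / real n} f \<le> (\<Sum>k=1..<n. f (real k / real n)) / real n"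
proof -
  define h where "h = 1 / real n"
  define F where "F k = f (real k / real n)" for k
  have h: "h > 0" using n by (simp add: h_def)
  have ends: "0 + real 1 * h = 1 / real n" "0 + real (n - 1) * h = 1 - 1 / real n"
    using n by (simp_all add: h_def field_simps)
  have int_sub: "f integrable_on {0 + real 1 * h .. 0 + real (n - 1) * h}"
    unfolding ends by (rule integrable_subinterval_real[OF int]) auto
  have cell: "integral {real k * h .. real (k + 1) * h} f \<le> h / 2 * (F k + F (k + 1))"
    if k: "k \<in> {1..<n-1}" for k
  proof -
    have kn: "1 \<le> real k" "real k + 2 \<le> real n" using k by auto
    hence lo: "0 < real k * h" and hi: "real (k + 1) * h < 1"
      using h by (simp_all add: h_def field_simps)
    have "integral {real k * h .. real (k + 1) * h} f
        \<le> (real (k + 1) * h - real k * h) * (f (real k * h) + f (real (k + 1) * h)) / 2"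
    proof (rule convex_on_integral_le_trapezoid)
      show "convex_on {real k * h .. real (k + 1) * h} f"
        by (rule convex_on_subset[OF convex]) (use lo hi in auto)
      show "f integrable_on {real k * h .. real (k + 1) * h}"
        by (rule integrable_subinterval_real[OF int]) (use lo hi in auto)
    qed (use h in simp)
    moreover have "real (k + 1) * h - real k * h = h" by (simp add: algebra_simps)
    ultimately show ?thesis by (simp add: F_def h_def)
  qed
  have shift: "(\<Sum>k=1..<n-1. F (k + 1)) = (\<Sum>k=2..<n. F k)"
    using sum.shift_bounds_nat_ivl[of F 1 1 "n - 1"] n by (simp add: numeral_2_eq_2)
  have "integral {1 / real n .. 1 - 1 / real n} f
      = (\<Sum>k=1..<n-1. integral {real k * h .. real (k + 1) * h} f)"
    using integral_equal_cells[OF int_sub] n h unfolding ends by simp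
  also have "\<dots> \<le> (\<Sum>k=1..<n-1. h / 2 * (F k + F (k + 1)))"
    by (rule sum_mono) (rule cell)
  also have "\<dots> = h / 2 * ((\<Sum>k=1..<n-1. F k) + (\<Sum>k=2..<n. F k))"
    by (simp only: sum_distrib_left[symmetric] sum.distrib shift)
  also have "\<dots> \<le> h / 2 * ((\<Sum>k=1..<n. F k) + (\<Sum>k=1..<n. F k))"
    using h nonneg
    by (intro mult_left_mono add_mono sum_mono2) (auto simp: F_def)
  also have "\<dots> = (\<Sum>k=1..<n. f (real k / real n)) / real n"
    by (simp add: F_def h_def)
  finally show ?thesis .
qed

lemma convex_riemann_sum_tendsto:
  fixes f :: "real \<Rightarrow> real"
  assumes convex: "convex_on {0<..<1} f" and int: "f integrable_on {0..1}"
    and nonneg: "\<And>t. t \<in> {0..1} \<Longrightarrow> 0 \<le> f t"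
  shows "(\<lambda>n. (\<Sum>k=1..<n. f (real k / real n)) / real n) \<longlonglongrightarrow> integral {0..1} f"
proof (rule tendsto_sandwich)
  define G where "G x = integral {0..x} f" for x
  have cont: "continuous_on {0..1} G"
    unfolding G_def by (rule indefinite_integral_continuous_1[OF int])
  have inv: "(\<lambda>n. 1 / real n) \<longlonglongrightarrow> 0" by (rule lim_1_over_n)
  have in01: "\<forall>\<^sub>F n in sequentially. 1 / real n \<in> {0..1} \<and> 1 - 1 / real n \<in> {0..1}"
    using eventually_ge_at_top[of "1::nat"] by eventually_elim auto
  have "(\<lambda>n. G (1 - 1 / real n) - G (1 / real n)) \<longlonglongrightarrow> G (1 - 0) - G 0"
    by (intro tendsto_diff continuous_on_tendsto_compose[OF cont] tendsto_intros inv)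
       (use in01 in \<open>auto elim: eventually_mono\<close>)
  moreover have "G (1 - 0) - G 0 = integral {0..1} f" by (simp add: G_def)
  ultimately have "(\<lambda>n. G (1 - 1 / real n) - G (1 / real n)) \<longlonglongrightarrow> integral {0..1} f" by simp
  thus "(\<lambda>n. integral {1 / real n .. 1 - 1 / real n} f) \<longlonglongrightarrow> integral {0..1} f"
  proof (rule Lim_transform_eventually)
    show "\<forall>\<^sub>F n in sequentially.
        G (1 - 1 / real n) - G (1 / real n) = integral {1 / real n .. 1 - 1 / real n} f"
      using eventually_ge_at_top[of "2::nat"]
    proof eventually_elim
      case (elim n)
      have "1 / real n \<le> 1 - 1 / real n" using elim by (simp add: field_simps)
      moreover have "f integrable_on {0..1 - 1 / real n}"
        by (rule integrable_subinterval_real[OF int]) auto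
      ultimately show ?case
        using Henstock_Kurzweil_Integration.integral_combine[of 0 "1 / real n" "1 - 1 / real n" f]
        by (simp add: G_def)
    qed
  qed
  show "\<forall>\<^sub>F n in sequentially. integral {1 / real n .. 1 - 1 / real n} f
          \<le> (\<Sum>k=1..<n. f (real k / real n)) / real n"
    using eventually_ge_at_top[of "2::nat"]
    by eventually_elim (rule integral_le_convex_riemann_sum[OF convex int nonneg])
  show "\<forall>\<^sub>F n in sequentially. (\<Sum>k=1..<n. f (real k / real n)) / real n \<le> integral {0..1} f"
    using eventually_ge_at_top[of "1::nat"]
    by eventually_elim (rule convex_riemann_sum_le_integral[OF convex int nonneg])
qed simp

lemma powr_mult_eq_beta_kernel:
  fixes x z :: real
  assumes "0 < x" "x < z"
  shows "x powr (a - 1) * (z - x) powr (b - 1) = z powr (a + b - 2) * beta_kernel a b (x / z)"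
proof -
  have "z - x = z * (1 - x / z)" using assms by (simp add: field_simps)
  hence "(z - x) powr (b - 1) = z powr (b - 1) * (1 - x / z) powr (b - 1)"
    using assms by (simp add: powr_mult)
  moreover have "x powr (a - 1) = z powr (a - 1) * (x / z) powr (a - 1)"
    using assms by (simp add: powr_divide)
  moreover have "z powr (a + b - 2) = z powr (a - 1) * z powr (b - 1)"
    by (simp add: powr_add[symmetric])
  ultimately show ?thesis by (simp add: beta_kernel_def)
qed

lemma powr_convolution_tendsto_Beta:
  assumes "0 < a" "a \<le> 1" "0 < b" "b \<le> 1"
  shows "(\<lambda>z. (\<Sum>x=1..<z. real x powr (a - 1) * real (z - x) powr (b - 1)) / real z powr (a + b - 1))
           \<longlonglongrightarrow> Beta a b"
proof -
  have "(\<lambda>z. (\<Sum>x=1..<z. beta_kernel a b (real x / real z)) / real z)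
          \<longlonglongrightarrow> integral {0..1} (beta_kernel a b)"
    using has_integral_beta_kernel[of a b] assms
    by (intro convex_riemann_sum_tendsto convex_on_beta_kernel beta_kernel_nonneg) auto
  also have "integral {0..1} (beta_kernel a b) = Beta a b"
    using has_integral_beta_kernel assms by (simp add: integral_unique)
  finally show ?thesis
  proof (rule Lim_transform_eventually)
    show "\<forall>\<^sub>F z in sequentially. (\<Sum>x=1..<z. beta_kernel a b (real x / real z)) / real z
        = (\<Sum>x=1..<z. real x powr (a - 1) * real (z - x) powr (b - 1)) / real z powr (a + b - 1)"
      using eventually_ge_at_top[of "1::nat"]
    proof eventually_elim
      case (elim z)
      have "(\<Sum>x=1..<z. real x powr (a - 1) * real (z - x) powr (b - 1)) / real z powr (a + b - 1)
          = real z powr (a + b - 2) / real z powr (a + b - 1)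
            * (\<Sum>x=1..<z. beta_kernel a b (real x / real z))"
        by (simp add: sum_distrib_left sum_divide_distrib powr_mult_eq_beta_kernel)
      also have "real z powr (a + b - 2) / real z powr (a + b - 1) = 1 / real z"
        using elim by (simp add: powr_diff[symmetric] powr_minus_divide)
      finally show ?case by simp
    qed
  qed
qed

definition compositions :: "nat \<Rightarrow> nat \<Rightarrow> nat list set" where
  "compositions k z = {xs. length xs = k \<and> (\<forall>x\<in>set xs. 0 < x) \<and> sum_list xs = z}"

lemma finite_compositions: "finite (compositions k z)"
proof (rule finite_subset)
  show "compositions k z \<subseteq> {xs. set xs \<subseteq> {0..z} \<and> length xs = k}"
    by (auto simp: compositions_def intro: member_le_sum_list)
qed (simp add: finite_lists_length_eq)

lemma compositions_Suc:
  "compositions (Suc k) z = (\<lambda>(x, xs). x # xs) ` (SIGMA x:{1..z}. compositions k (z - x))"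
proof (intro equalityI subsetI)
  fix xs assume xs: "xs \<in> compositions (Suc k) z"
  then obtain x ys where "xs = x # ys" by (cases xs) (auto simp: compositions_def)
  with xs show "xs \<in> (\<lambda>(x, xs). x # xs) ` (SIGMA x:{1..z}. compositions k (z - x))"
    by (force simp: compositions_def)
qed (auto simp: compositions_def)

fun composition_sum :: "real \<Rightarrow> nat \<Rightarrow> nat \<Rightarrow> real" where
  "composition_sum \<alpha> 0 z = (if z = 0 then 1 else 0)"
| "composition_sum \<alpha> (Suc k) z = (\<Sum>x=1..z. real x powr (\<alpha> - 1) * composition_sum \<alpha> k (z - x))"

lemma composition_sum_eq_sum_compositions:
  "composition_sum \<alpha> k z = (\<Sum>xs\<in>compositions k z. \<Prod>x\<leftarrow>xs. real x powr (\<alpha> - 1))"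
proof (induction k arbitrary: z)
  case 0
  have "compositions 0 z = (if z = 0 then {[]} else {})" by (auto simp: compositions_def)
  thus ?case by simp
next
  case (Suc k)
  define P where "P xs = (\<Prod>x\<leftarrow>xs. real x powr (\<alpha> - 1))" for xs
  have "inj_on (\<lambda>(x, xs). x # xs) (SIGMA x:{1..z}. compositions k (z - x))"
    by (auto simp: inj_on_def)
  hence "(\<Sum>xs\<in>compositions (Suc k) z. P xs)
      = (\<Sum>(x, xs)\<in>(SIGMA x:{1..z}. compositions k (z - x)). P (x # xs))"
    unfolding compositions_Suc by (simp add: sum.reindex case_prod_unfold)
  also have "\<dots> = (\<Sum>x=1..z. \<Sum>xs\<in>compositions k (z - x). real x powr (\<alpha> - 1) * P xs)"
    by (subst sum.Sigma[symmetric]) (auto simp: finite_compositions P_def)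
  finally show ?case by (simp add: Suc.IH sum_distrib_left P_def)
qed

lemma composition_sum_Suc_eq:
  assumes "1 \<le> k"
  shows "composition_sum \<alpha> (Suc k) z = (\<Sum>x=1..<z. real x powr (\<alpha> - 1) * composition_sum \<alpha> k (z - x))"
proof (cases "z = 0")
  case False
  hence "{1..z} = insert z {1..<z}" by auto
  moreover have "composition_sum \<alpha> k 0 = 0" using assms by (cases k) auto
  ultimately show ?thesis by simp
qed simp

lemma composition_sum_one:
  assumes "1 \<le> z"
  shows "composition_sum \<alpha> 1 z = real z powr (\<alpha> - 1)"
proof -
  have "composition_sum \<alpha> 1 z = (\<Sum>x=1..z. real x powr (\<alpha> - 1) * composition_sum \<alpha> 0 (z - x))"
    by (simp only: One_nat_def composition_sum.simps(2))
  also have "\<dots> = (\<Sum>x=1..z. if x = z then real x powr (\<alpha> - 1) else 0)"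
    by (intro sum.cong) auto
  finally show ?thesis using assms by simp
qed

lemma convolution_error_le:
  fixes e :: "nat \<Rightarrow> real"
  assumes "\<alpha> \<le> 1" "q \<le> 0" and E: "\<And>y. \<bar>e y\<bar> \<le> E"
    and \<delta>: "\<And>y. M \<le> y \<Longrightarrow> \<bar>e y\<bar> \<le> \<delta>" "0 \<le> \<delta>" and z: "2 * M \<le> z"
  shows "\<bar>\<Sum>x=1..<z. real x powr (\<alpha> - 1) * real (z - x) powr q * e (z - x)\<bar>
    \<le> \<delta> * (\<Sum>x=1..<z. real x powr (\<alpha> - 1) * real (z - x) powr q) + real M * E * (real z / 2) powr (\<alpha> - 1)"
proof -
  define w where "w x = real x powr (\<alpha> - 1) * real (z - x) powr q" for x
  \<comment> \<open>Terms with z - x \<ge> M carry the factor \<delta>; the at most M others have x > z/2.\<close>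
  have term_le: "\<bar>w x * e (z - x)\<bar> \<le> \<delta> * w x + (if z - x < M then E * (real z / 2) powr (\<alpha> - 1) else 0)"
    if x: "x \<in> {1..<z}" for x
  proof (cases "z - x < M")
    case True
    have "real x powr (\<alpha> - 1) \<le> (real z / 2) powr (\<alpha> - 1)"
      using True x z assms(1) by (intro powr_mono2') auto
    moreover have "real (z - x) powr q \<le> 1 powr q"
      using x assms(2) by (intro powr_mono2') auto
    ultimately have "w x \<le> (real z / 2) powr (\<alpha> - 1) * 1"
      unfolding w_def by (intro mult_mono) auto
    hence "w x * \<bar>e (z - x)\<bar> \<le> (real z / 2) powr (\<alpha> - 1) * E"
      using E[of "z - x"] by (intro mult_mono) (auto simp: w_def)
    hence "\<bar>w x * e (z - x)\<bar> \<le> E * (real z / 2) powr (\<alpha> - 1)"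
      by (simp add: abs_mult w_def mult.commute)
    moreover have "0 \<le> \<delta> * w x" using \<delta>(2) by (simp add: w_def)
    ultimately show ?thesis using True by simp
  next
    case False
    hence "w x * \<bar>e (z - x)\<bar> \<le> w x * \<delta>"
      using \<delta>(1)[of "z - x"] by (intro mult_left_mono) (auto simp: w_def)
    thus ?thesis using False by (simp add: abs_mult w_def mult.commute)
  qed
  have "card {x\<in>{1..<z}. z - x < M} \<le> card {z - M..<z}"
    by (intro card_mono) auto
  hence card_le: "card {x\<in>{1..<z}. z - x < M} \<le> M" using z by simp
  have "\<bar>\<Sum>x=1..<z. w x * e (z - x)\<bar> \<le> (\<Sum>x=1..<z. \<bar>w x * e (z - x)\<bar>)"
    by (rule sum_abs)
  also have "\<dots> \<le> (\<Sum>x=1..<z. \<delta> * w x + (if z - x < M then E * (real z / 2) powr (\<alpha> - 1) else 0))"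
    by (rule sum_mono) (rule term_le)
  also have "\<dots> = \<delta> * (\<Sum>x=1..<z. w x)
      + real (card {x\<in>{1..<z}. z - x < M}) * E * (real z / 2) powr (\<alpha> - 1)"
    by (simp add: sum.distrib sum_distrib_left sum.inter_filter[symmetric])
  also have "\<dots> \<le> \<delta> * (\<Sum>x=1..<z. w x) + real M * E * (real z / 2) powr (\<alpha> - 1)"
    using card_le E[of 0] by (intro add_left_mono mult_right_mono) auto
  finally show ?thesis by (simp add: w_def)
qed

lemma half_powr_divide_powr:
  fixes z :: real
  assumes "0 < z"
  shows "(z / 2) powr (\<alpha> - 1) / z powr (\<alpha> + q) = 2 powr (1 - \<alpha>) * z powr (- 1 - q)"
proof -
  have "1 / 2 powr (\<alpha> - 1) = 2 powr (1 - \<alpha>)"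
    using powr_minus_divide[of 2 "\<alpha> - 1"] by simp
  moreover have "z powr (\<alpha> - 1) / z powr (\<alpha> + q) = z powr (- 1 - q)"
    using powr_diff[of z "\<alpha> - 1" "\<alpha> + q"] by simp
  moreover have "(z / 2) powr (\<alpha> - 1) / z powr (\<alpha> + q)
      = 1 / 2 powr (\<alpha> - 1) * (z powr (\<alpha> - 1) / z powr (\<alpha> + q))"
    using assms by (simp add: powr_divide)
  ultimately show ?thesis by simp
qed

lemma convolution_error_tendsto_zero:
  fixes e :: "nat \<Rightarrow> real"
  assumes "0 < \<alpha>" "\<alpha> \<le> 1" "-1 < q" "q \<le> 0" and e: "e \<longlonglongrightarrow> 0"
    and conv: "(\<lambda>z. (\<Sum>x=1..<z. real x powr (\<alpha> - 1) * real (z - x) powr q) / real z powr (\<alpha> + q))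
      \<longlonglongrightarrow> B"
  shows "(\<lambda>z. (\<Sum>x=1..<z. real x powr (\<alpha> - 1) * real (z - x) powr q * e (z - x)) / real z powr (\<alpha> + q))
           \<longlonglongrightarrow> 0"
proof (rule tendstoI)
  fix \<epsilon> :: real assume \<epsilon>: "\<epsilon> > 0"
  define W where
    "W z = (\<Sum>x=1..<z. real x powr (\<alpha> - 1) * real (z - x) powr q) / real z powr (\<alpha> + q)" for z
  obtain E where E: "\<And>y. \<bar>e y\<bar> \<le> E"
    using convergent_imp_Bseq[OF convergentI[OF e]] by (auto simp: Bseq_def)
  define \<delta> where "\<delta> = \<epsilon> / (2 * (\<bar>B\<bar> + 1))"
  have "\<bar>B\<bar> + 1 > 0" by simp
  hence \<delta>: "\<delta> > 0" "\<delta> * (\<bar>B\<bar> + 1) = \<epsilon> / 2"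
    using \<epsilon> unfolding \<delta>_def by (simp_all add: field_simps)
  obtain M where M: "\<And>y. M \<le> y \<Longrightarrow> \<bar>e y\<bar> \<le> \<delta>"
    using e[THEN tendstoD, OF \<delta>(1)] by (force simp: eventually_sequentially)
  define C where "C = real M * E * 2 powr (1 - \<alpha>)"
  have "(\<lambda>z. C * real z powr (- 1 - q)) \<longlonglongrightarrow> C * 0"
    using assms(3) by (intro tendsto_mult tendsto_const tendsto_neg_powr filterlim_real_sequentially) auto
  hence small: "\<forall>\<^sub>F z in sequentially. C * real z powr (- 1 - q) < \<epsilon> / 2"
    using order_tendstoD(2)[of _ 0 _ "\<epsilon> / 2"] \<epsilon> by simp
  have bounded: "\<forall>\<^sub>F z in sequentially. W z < \<bar>B\<bar> + 1"
    using conv unfolding W_def[symmetric] by (rule order_tendstoD(2)) simp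
  show "\<forall>\<^sub>F z in sequentially. dist ((\<Sum>x=1..<z. real x powr (\<alpha> - 1) * real (z - x) powr q * e (z - x))
      / real z powr (\<alpha> + q)) 0 < \<epsilon>"
    using small bounded eventually_ge_at_top[of "max 1 (2 * M)"]
  proof eventually_elim
    case (elim z)
    have z: "real z > 0" using elim(3) by simp
    have scale: "real M * E * (real z / 2) powr (\<alpha> - 1) / real z powr (\<alpha> + q)
        = C * real z powr (- 1 - q)"
      using half_powr_divide_powr[OF z, of \<alpha> q] unfolding C_def
      by (metis mult.assoc times_divide_eq_right)
    have "\<bar>\<Sum>x=1..<z. real x powr (\<alpha> - 1) * real (z - x) powr q * e (z - x)\<bar> / real z powr (\<alpha> + q)
        \<le> (\<delta> * (\<Sum>x=1..<z. real x powr (\<alpha> - 1) * real (z - x) powr q)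
            + real M * E * (real z / 2) powr (\<alpha> - 1)) / real z powr (\<alpha> + q)"
      using elim(3) assms \<delta>(1) by (intro divide_right_mono convolution_error_le[OF _ _ E M]) auto
    also have "\<dots> = \<delta> * W z + C * real z powr (- 1 - q)"
      by (simp add: W_def add_divide_distrib scale)
    also have "\<dots> < \<delta> * (\<bar>B\<bar> + 1) + \<epsilon> / 2"
      using elim(1,2) \<delta>(1) by (intro add_le_less_mono mult_left_mono) auto
    finally show ?case using \<delta>(2) z by (simp add: dist_real_def)
  qed
qed

lemma composition_sum_Suc_tendsto:
  assumes "0 < \<alpha>" "1 \<le> k" "real (Suc k) * \<alpha> \<le> 1"
    and lim: "(\<lambda>z. composition_sum \<alpha> k z / real z powr (real k * \<alpha> - 1)) \<longlonglongrightarrow> c"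
  shows "(\<lambda>z. composition_sum \<alpha> (Suc k) z / real z powr (real (Suc k) * \<alpha> - 1))
           \<longlonglongrightarrow> c * Beta \<alpha> (real k * \<alpha>)"
proof -
  define q where "q = real k * \<alpha> - 1"
  define W where "W z = (\<Sum>x=1..<z. real x powr (\<alpha> - 1) * real (z - x) powr q)" for z
  define e where "e y = composition_sum \<alpha> k y / real y powr q - c" for y
  have exponent: "real (Suc k) * \<alpha> - 1 = \<alpha> + q" by (simp add: q_def algebra_simps)
  have "real (Suc k) * \<alpha> = \<alpha> + real k * \<alpha>" by (simp add: algebra_simps)
  moreover have "0 < real k * \<alpha>" using assms(1,2) by simp
  ultimately have "0 < real k * \<alpha>" "real k * \<alpha> \<le> 1" "\<alpha> \<le> 1"
    using assms(1,3) by linarith+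
  hence W: "(\<lambda>z. W z / real z powr (\<alpha> + q)) \<longlonglongrightarrow> Beta \<alpha> (real k * \<alpha>)"
    using powr_convolution_tendsto_Beta[of \<alpha> "real k * \<alpha>"] assms(1)
    unfolding W_def q_def by (simp add: algebra_simps)
  have "e \<longlonglongrightarrow> c - c"
    unfolding e_def q_def by (intro tendsto_diff lim tendsto_const)
  hence error: "(\<lambda>z. (\<Sum>x=1..<z. real x powr (\<alpha> - 1) * real (z - x) powr q * e (z - x))
      / real z powr (\<alpha> + q)) \<longlonglongrightarrow> 0"
    using \<open>0 < real k * \<alpha>\<close> \<open>real k * \<alpha> \<le> 1\<close> \<open>\<alpha> \<le> 1\<close> assms(1)
    by (intro convolution_error_tendsto_zero[OF _ _ _ _ _ W[unfolded W_def]]) (auto simp: q_def)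
  have decompose: "composition_sum \<alpha> (Suc k) z
      = c * W z + (\<Sum>x=1..<z. real x powr (\<alpha> - 1) * real (z - x) powr q * e (z - x))" for z
  proof -
    have "composition_sum \<alpha> k y = c * real y powr q + real y powr q * e y" if "1 \<le> y" for y
      using that by (simp add: e_def algebra_simps)
    hence "composition_sum \<alpha> (Suc k) z
        = (\<Sum>x=1..<z. real x powr (\<alpha> - 1) * (c * real (z - x) powr q + real (z - x) powr q * e (z - x)))"
      unfolding composition_sum_Suc_eq[OF assms(2)] by (intro sum.cong) auto
    thus ?thesis by (simp add: W_def distrib_left sum.distrib sum_distrib_left mult_ac)
  qed
  have "(\<lambda>z. c * (W z / real z powr (\<alpha> + q))
        + (\<Sum>x=1..<z. real x powr (\<alpha> - 1) * real (z - x) powr q * e (z - x)) / real z powr (\<alpha> + q))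
      \<longlonglongrightarrow> c * Beta \<alpha> (real k * \<alpha>) + 0"
    by (intro tendsto_add tendsto_mult tendsto_const W error)
  thus ?thesis
    unfolding exponent decompose by (simp add: add_divide_distrib)
qed

theorem composition_sum_asymp:
  assumes "0 < \<alpha>" "1 \<le> k" "real k * \<alpha> \<le> 1"
  shows "(\<lambda>z. composition_sum \<alpha> k z / real z powr (real k * \<alpha> - 1))
           \<longlonglongrightarrow> Gamma \<alpha> ^ k / Gamma (real k * \<alpha>)"
  using assms(2,3)
proof (induction k rule: nat_induct_at_least)
  case base
  have "\<forall>\<^sub>F z in sequentially. 1 = composition_sum \<alpha> 1 z / real z powr (real 1 * \<alpha> - 1)"
    using eventually_ge_at_top[of "1::nat"] by eventually_elim (use composition_sum_one in force)
  thus ?case using Gamma_real_pos[OF assms(1)] by (simp add: tendsto_eventually)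
next
  case (Suc k)
  have "real k * \<alpha> \<le> real (Suc k) * \<alpha>" using assms(1) by (intro mult_right_mono) auto
  hence "(\<lambda>z. composition_sum \<alpha> (Suc k) z / real z powr (real (Suc k) * \<alpha> - 1))
      \<longlonglongrightarrow> Gamma \<alpha> ^ k / Gamma (real k * \<alpha>) * Beta \<alpha> (real k * \<alpha>)"
    using Suc by (intro composition_sum_Suc_tendsto assms(1)) auto
  moreover have "Gamma (real k * \<alpha>) > 0" using Suc.hyps assms(1) by (intro Gamma_real_pos) simp
  moreover have "\<alpha> + real k * \<alpha> = real (Suc k) * \<alpha>" by (simp add: algebra_simps)
  ultimately show ?case
    unfolding Beta_def by (simp add: field_simps)
qed

lemma composition_sum_tendsto_zero:
  assumes "0 < \<alpha>" "real r * \<alpha> < 1"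
  shows "(\<lambda>z. composition_sum \<alpha> r z) \<longlonglongrightarrow> 0"
proof (cases "r = 0")
  case True
  have "\<forall>\<^sub>F z in sequentially. 0 = composition_sum \<alpha> r z"
    using eventually_ge_at_top[of "1::nat"] by eventually_elim (use True in auto)
  thus ?thesis by (simp add: tendsto_eventually)
next
  case False
  have "(\<lambda>z. composition_sum \<alpha> r z / real z powr (real r * \<alpha> - 1) * real z powr (real r * \<alpha> - 1))
      \<longlonglongrightarrow> Gamma \<alpha> ^ r / Gamma (real r * \<alpha>) * 0"
    using False assms
    by (intro tendsto_mult composition_sum_asymp tendsto_neg_powr filterlim_real_sequentially) auto
  moreover have "\<forall>\<^sub>F z in sequentially. composition_sum \<alpha> r z / real z powr (real r * \<alpha> - 1)
      * real z powr (real r * \<alpha> - 1) = composition_sum \<alpha> r z"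
    using eventually_ge_at_top[of "1::nat"] by eventually_elim simp
  ultimately show ?thesis by (simp add: Lim_transform_eventually)
qed

lemma mem_Omega_iff:
  "w \<in> Omega s z \<longleftrightarrow> finite w \<and> 0 \<notin> w \<and>
     (\<exists>a. (\<forall>x\<in>w. 1 \<le> a x) \<and> (\<Sum>x\<in>w. a x) = s \<and> z = (\<Sum>x\<in>w. a x * x))"
  by (auto simp: Omega_def sigma_def)

lemma Omega_subset: "w \<in> Omega s z \<Longrightarrow> w \<subseteq> {1..z}"
proof
  fix x assume w: "w \<in> Omega s z" and x: "x \<in> w"
  then obtain a where a: "finite w" "0 \<notin> w" "\<forall>x\<in>w. 1 \<le> a x" "z = (\<Sum>x\<in>w. a x * x)"
    by (auto simp: mem_Omega_iff)
  have "x \<le> a x * x" using a x by simp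
  also have "\<dots> \<le> z" unfolding a(4) using a x by (intro member_le_sum) auto
  finally show "x \<in> {1..z}" using a x by (cases x) auto
qed

lemma finite_Omega: "finite (Omega s z)"
  by (rule finite_subset[of _ "Pow {1..z}"]) (use Omega_subset in auto)

lemma card_le_if_mem_Omega:
  assumes "w \<in> Omega s z" shows "card w \<le> s"
proof -
  obtain a where a: "finite w" "\<forall>x\<in>w. 1 \<le> a x" "(\<Sum>x\<in>w. a x) = s"
    using assms by (auto simp: mem_Omega_iff)
  have "card w = (\<Sum>x\<in>w. 1)" by simp
  also have "\<dots> \<le> s" unfolding a(3)[symmetric] using a by (intro sum_mono) auto
  finally show ?thesis .
qed

text \<open>When s multiplicities are spread over s distinct elements, each of them is 1.\<close>

lemma mem_Omega_card_eq_iff: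
  "w \<in> Omega s z \<and> card w = s \<longleftrightarrow> finite w \<and> 0 \<notin> w \<and> card w = s \<and> \<Sum>w = z"
proof
  assume w: "w \<in> Omega s z \<and> card w = s"
  then obtain a where a: "finite w" "0 \<notin> w" "\<forall>x\<in>w. 1 \<le> a x" "(\<Sum>x\<in>w. a x) = s"
      "z = (\<Sum>x\<in>w. a x * x)"
    by (auto simp: mem_Omega_iff)
  have "(\<Sum>x\<in>w. (1::nat)) = (\<Sum>x\<in>w. a x)" using a w by simp
  hence "a x = 1" if "x \<in> w" for x
    using sum_mono_inv[of "\<lambda>_. 1" w a x] a that by auto
  thus "finite w \<and> 0 \<notin> w \<and> card w = s \<and> \<Sum>w = z" using a w by simp
next
  assume "finite w \<and> 0 \<notin> w \<and> card w = s \<and> \<Sum>w = z"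
  thus "w \<in> Omega s z \<and> card w = s"
    unfolding mem_Omega_iff by (auto intro!: exI[of _ "\<lambda>_. 1"])
qed

lemma PE_eq:
  assumes "finite w"
  shows "PE s w = (1 / real s) ^ card w * (\<Prod>x\<in>w. real x powr (1 / real s - 1))"
proof -
  have "-1 + 1 / real s = 1 / real s - 1" by simp
  hence "PE s w = (\<Prod>x\<in>w. 1 / real s) * (\<Prod>x\<in>w. real x powr (1 / real s - 1))"
    unfolding PE_def by (simp only: prod.distrib)
  thus ?thesis using assms by simp
qed

lemma distinct_compositions_eq:
  "{xs\<in>compositions s z. distinct xs} = (\<Union>w\<in>{w\<in>Omega s z. card w = s}. permutations_of_set w)"
proof (intro equalityI subsetI)
  fix xs assume "xs \<in> {xs\<in>compositions s z. distinct xs}"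
  hence "set xs \<in> {w\<in>Omega s z. card w = s}" "xs \<in> permutations_of_set (set xs)"
    unfolding mem_Collect_eq mem_Omega_card_eq_iff
    by (auto simp: compositions_def distinct_card sum.distinct_set_conv_list permutations_of_set_def)
  thus "xs \<in> (\<Union>w\<in>{w\<in>Omega s z. card w = s}. permutations_of_set w)" by blast
next
  fix xs assume "xs \<in> (\<Union>w\<in>{w\<in>Omega s z. card w = s}. permutations_of_set w)"
  then obtain w where "finite w \<and> 0 \<notin> w \<and> card w = s \<and> \<Sum>w = z" "set xs = w" "distinct xs"
    by (auto simp: permutations_of_set_def mem_Omega_card_eq_iff)
  thus "xs \<in> {xs\<in>compositions s z. distinct xs}"
    by (auto simp: compositions_def distinct_card sum.distinct_set_conv_list intro: gr0I)
qed

lemma sum_distinct_compositions: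
  fixes g :: "nat \<Rightarrow> real"
  shows "(\<Sum>xs\<in>{xs\<in>compositions s z. distinct xs}. \<Prod>x\<leftarrow>xs. g x)
       = fact s * (\<Sum>w\<in>{w\<in>Omega s z. card w = s}. prod g w)"
proof -
  have "(\<Sum>xs\<in>{xs\<in>compositions s z. distinct xs}. \<Prod>x\<leftarrow>xs. g x)
      = (\<Sum>w\<in>{w\<in>Omega s z. card w = s}. \<Sum>xs\<in>permutations_of_set w. \<Prod>x\<leftarrow>xs. g x)"
    unfolding distinct_compositions_eq using finite_Omega
    by (intro sum.UNION_disjoint) (simp_all, auto simp: permutations_of_set_def)
  also have "\<dots> = (\<Sum>w\<in>{w\<in>Omega s z. card w = s}. fact s * prod g w)"
  proof (intro sum.cong refl)
    fix w assume w: "w \<in> {w\<in>Omega s z. card w = s}"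
    hence "finite w" by (simp add: mem_Omega_iff)
    have "(\<Sum>xs\<in>permutations_of_set w. \<Prod>x\<leftarrow>xs. g x) = (\<Sum>xs\<in>permutations_of_set w. prod g w)"
      by (intro sum.cong) (auto simp: permutations_of_set_def prod.distinct_set_conv_list)
    thus "(\<Sum>xs\<in>permutations_of_set w. \<Prod>x\<leftarrow>xs. g x) = fact s * prod g w"
      using \<open>finite w\<close> w by simp
  qed
  finally show ?thesis by (simp add: sum_distrib_left)
qed

lemma nondistinct_composition_set_mem_Omega:
  assumes "xs \<in> compositions s z" "\<not> distinct xs"
  shows "set xs \<in> Omega s z" "card (set xs) < s"
proof -
  have len: "length xs = s" and pos: "\<forall>x\<in>set xs. 0 < x" and sum: "sum_list xs = z"
    using assms by (auto simp: compositions_def)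
  have "(\<Sum>x\<in>set xs. count_list xs x) = s" "z = (\<Sum>x\<in>set xs. count_list xs x * x)"
    using sum_list_map_eq_sum_count[of "\<lambda>_. 1" xs] sum_list_map_eq_sum_count[of "\<lambda>x. x" xs] len sum
    by (simp_all add: sum_list_triv)
  moreover have "\<forall>x\<in>set xs. 1 \<le> count_list xs x"
    by (metis count_list_0_iff less_one not_le)
  ultimately show "set xs \<in> Omega s z"
    unfolding mem_Omega_iff using pos by blast
  show "card (set xs) < s"
    using assms(2) len card_length[of xs] card_distinct[of xs] by fastforce
qed

lemma sum_comp_le_fiber_card_mult:
  fixes h :: "'b \<Rightarrow> real"
  assumes "finite A" "finite B" "f ` A \<subseteq> B" "\<And>b. b \<in> B \<Longrightarrow> 0 \<le> h b"
    and "\<And>b. b \<in> f ` A \<Longrightarrow> card {a\<in>A. f a = b} \<le> K"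
  shows "(\<Sum>a\<in>A. h (f a)) \<le> real K * (\<Sum>b\<in>B. h b)"
proof -
  have "(\<Sum>a\<in>A. h (f a)) = (\<Sum>b\<in>f ` A. real (card {a\<in>A. f a = b}) * h b)"
    using sum.image_gen[OF assms(1), of "\<lambda>a. h (f a)" f] by simp
  also have "\<dots> \<le> (\<Sum>b\<in>f ` A. real K * h b)"
    using assms by (intro sum_mono mult_right_mono) auto
  also have "\<dots> \<le> (\<Sum>b\<in>B. real K * h b)"
    using assms by (intro sum_mono2) auto
  finally show ?thesis by (simp add: sum_distrib_left)
qed

lemma prod_list_map_le_prod_set:
  fixes g :: "'a \<Rightarrow> real"
  assumes "\<And>x. x \<in> set xs \<Longrightarrow> 0 \<le> g x \<and> g x \<le> 1"
  shows "(\<Prod>x\<leftarrow>xs. g x) \<le> prod g (set xs)"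
  using assms
proof (induction xs)
  case (Cons x xs)
  have IH: "(\<Prod>x\<leftarrow>xs. g x) \<le> prod g (set xs)" and g: "0 \<le> g x" "g x \<le> 1"
    using Cons by auto
  have "0 \<le> (\<Prod>x\<leftarrow>xs. g x)" using Cons.prems by (intro prod_list_nonneg) auto
  show ?case
  proof (cases "x \<in> set xs")
    case True
    hence "prod g (set (x # xs)) = prod g (set xs)" by (simp add: insert_absorb)
    thus ?thesis using IH g mult_right_mono[of "g x" 1 "\<Prod>x\<leftarrow>xs. g x"] \<open>0 \<le> (\<Prod>x\<leftarrow>xs. g x)\<close>
      by simp
  qed (use IH g in \<open>simp add: mult_left_mono\<close>)
qed simp

lemma sum_nondistinct_compositions_le:
  assumes "\<alpha> \<le> 1"
  shows "(\<Sum>xs\<in>{xs\<in>compositions s z. \<not> distinct xs}. \<Prod>x\<leftarrow>xs. real x powr (\<alpha> - 1))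
       \<le> real (s ^ s) * (\<Sum>w\<in>{w\<in>Omega s z. card w < s}. \<Prod>x\<in>w. real x powr (\<alpha> - 1))"
proof -
  define g where "g x = real x powr (\<alpha> - 1)" for x :: nat
  define N where "N = {xs\<in>compositions s z. \<not> distinct xs}"
  have "(\<Sum>xs\<in>N. \<Prod>x\<leftarrow>xs. g x) \<le> (\<Sum>xs\<in>N. prod g (set xs))"
  proof (intro sum_mono prod_list_map_le_prod_set)
    fix xs x assume "xs \<in> N" "x \<in> set xs"
    hence "1 \<le> x" by (auto simp: N_def compositions_def Suc_le_eq)
    thus "0 \<le> g x \<and> g x \<le> 1"
      using powr_mono[of "\<alpha> - 1" 0 "real x"] assms by (simp add: g_def)
  qed
  also have "\<dots> \<le> real (s ^ s) * (\<Sum>w\<in>{w\<in>Omega s z. card w < s}. prod g w)"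
  proof (rule sum_comp_le_fiber_card_mult)
    show "finite N" by (simp add: N_def finite_compositions)
    show "set ` N \<subseteq> {w\<in>Omega s z. card w < s}"
      using nondistinct_composition_set_mem_Omega by (auto simp: N_def)
    fix w assume "w \<in> set ` N"
    hence w: "w \<in> Omega s z" "finite w"
      using nondistinct_composition_set_mem_Omega by (auto simp: N_def)
    have "card {xs\<in>N. set xs = w} \<le> card {xs. set xs \<subseteq> w \<and> length xs = s}"
      by (rule card_mono[OF finite_lists_length_eq[OF w(2)]]) (auto simp: N_def compositions_def)
    also have "\<dots> = card w ^ s" by (rule card_lists_length_eq[OF w(2)])
    also have "\<dots> \<le> s ^ s" by (intro power_mono card_le_if_mem_Omega[OF w(1)]) simp
    finally show "card {xs\<in>N. set xs = w} \<le> s ^ s" .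
  qed (auto simp: finite_Omega g_def intro: prod_nonneg)
  finally show ?thesis by (simp add: N_def g_def)
qed

definition Omega_coeffs :: "nat \<Rightarrow> nat \<Rightarrow> nat set \<Rightarrow> nat \<Rightarrow> nat" where
  "Omega_coeffs s z w = (SOME a. (\<forall>x\<in>w. 1 \<le> a x) \<and> (\<Sum>x\<in>w. a x) = s \<and> z = (\<Sum>x\<in>w. a x * x))"

definition Omega_composition :: "nat \<Rightarrow> nat \<Rightarrow> nat set \<Rightarrow> nat list" where
  "Omega_composition s z w = map (\<lambda>x. Omega_coeffs s z w x * x) (sorted_list_of_set w)"

lemma Omega_coeffs:
  assumes "w \<in> Omega s z"
  shows "\<And>x. x \<in> w \<Longrightarrow> 1 \<le> Omega_coeffs s z w x" "\<And>x. x \<in> w \<Longrightarrow> Omega_coeffs s z w x \<le> s"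
    and "(\<Sum>x\<in>w. Omega_coeffs s z w x) = s" "z = (\<Sum>x\<in>w. Omega_coeffs s z w x * x)"
proof -
  have "\<exists>a. (\<forall>x\<in>w. 1 \<le> a x) \<and> (\<Sum>x\<in>w. a x) = s \<and> z = (\<Sum>x\<in>w. a x * x)"
    using assms by (simp add: mem_Omega_iff)
  hence a: "(\<forall>x\<in>w. 1 \<le> Omega_coeffs s z w x) \<and> (\<Sum>x\<in>w. Omega_coeffs s z w x) = s
      \<and> z = (\<Sum>x\<in>w. Omega_coeffs s z w x * x)"
    unfolding Omega_coeffs_def by (rule someI_ex)
  thus "\<And>x. x \<in> w \<Longrightarrow> 1 \<le> Omega_coeffs s z w x" "(\<Sum>x\<in>w. Omega_coeffs s z w x) = s"
    "z = (\<Sum>x\<in>w. Omega_coeffs s z w x * x)" by auto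
  show "Omega_coeffs s z w x \<le> s" if "x \<in> w" for x
    using member_le_sum[of x w "Omega_coeffs s z w"] a that assms by (simp add: mem_Omega_iff)
qed

lemma Omega_composition_mem_compositions:
  assumes "w \<in> Omega s z"
  shows "Omega_composition s z w \<in> compositions (card w) z"
proof -
  have "finite w" "0 \<notin> w" using assms by (auto simp: mem_Omega_iff)
  moreover have "0 < Omega_coeffs s z w x * x" if "x \<in> w" for x
    using Omega_coeffs(1)[OF assms that] \<open>0 \<notin> w\<close> that by (intro mult_pos_pos) (auto intro: gr0I)
  ultimately show ?thesis
    using Omega_coeffs(4)[OF assms]
    by (auto simp: compositions_def Omega_composition_def sum_list_distinct_conv_sum_set)
qed

lemma prod_powr_le_Omega_composition:
  assumes "0 \<le> \<alpha>" "w \<in> Omega s z"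
  shows "(\<Prod>x\<in>w. real x powr (\<alpha> - 1))
       \<le> real s ^ card w * (\<Prod>x\<leftarrow>Omega_composition s z w. real x powr (\<alpha> - 1))"
proof -
  define a where "a = Omega_coeffs s z w"
  have w: "finite w" "0 \<notin> w" using assms(2) by (auto simp: mem_Omega_iff)
  have "real x powr (\<alpha> - 1) \<le> real s * real (a x * x) powr (\<alpha> - 1)" if x: "x \<in> w" for x
  proof -
    have ax: "1 \<le> a x" "a x \<le> s" using Omega_coeffs(1,2)[OF assms(2) x] by (simp_all add: a_def)
    have "1 / real s \<le> 1 / real (a x)" using ax by (simp add: frac_le)
    also have "\<dots> = real (a x) powr (-1)" using ax by (simp add: powr_minus_divide)
    also have "\<dots> \<le> real (a x) powr (\<alpha> - 1)" using ax assms(1) by (intro powr_mono) auto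
    finally have "1 \<le> real s * real (a x) powr (\<alpha> - 1)"
      using ax by (simp add: field_simps)
    hence "1 * real x powr (\<alpha> - 1) \<le> real s * real (a x) powr (\<alpha> - 1) * real x powr (\<alpha> - 1)"
      by (rule mult_right_mono) simp
    thus ?thesis by (simp add: powr_mult mult_ac)
  qed
  hence "(\<Prod>x\<in>w. real x powr (\<alpha> - 1)) \<le> (\<Prod>x\<in>w. real s * real (a x * x) powr (\<alpha> - 1))"
    by (intro prod_mono) auto
  also have "\<dots> = real s ^ card w * (\<Prod>x\<in>w. real (a x * x) powr (\<alpha> - 1))"
    by (simp add: prod.distrib)
  also have "(\<Prod>x\<in>w. real (a x * x) powr (\<alpha> - 1))
      = (\<Prod>x\<leftarrow>Omega_composition s z w. real x powr (\<alpha> - 1))"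
    using w prod.distinct_set_conv_list[of "sorted_list_of_set w" "\<lambda>x. real (a x * x) powr (\<alpha> - 1)"]
    by (simp add: Omega_composition_def a_def o_def)
  finally show ?thesis .
qed

text \<open>A set is recovered from its composition once the coefficients are known, and these lie in
  \<open>{1..s}\<close>.\<close>

lemma card_Omega_composition_fiber_le:
  "card {w\<in>Omega s z. Omega_composition s z w = us} \<le> s ^ length us"
proof -
  define C where "C = {cs. set cs \<subseteq> {1..s} \<and> length cs = length us}"
  define F where "F cs = set (map (\<lambda>(u, c). u div c) (zip us cs))" for cs
  have div: "map (\<lambda>(u, c). u div c) (zip (map (\<lambda>x. f x * x) xs) (map f xs)) = xs"
    if "\<forall>x\<in>set xs. 0 < f x" for f :: "nat \<Rightarrow> nat" and xs
    using that by (induction xs) auto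
  have "{w\<in>Omega s z. Omega_composition s z w = us} \<subseteq> F ` C"
  proof
    fix w assume "w \<in> {w\<in>Omega s z. Omega_composition s z w = us}"
    hence w: "w \<in> Omega s z" "Omega_composition s z w = us" by auto
    define ys where "ys = sorted_list_of_set w"
    have ys: "set ys = w" "length ys = card w"
      using w(1) by (auto simp: ys_def mem_Omega_iff)
    define cs where "cs = map (Omega_coeffs s z w) ys"
    have "map (\<lambda>(u, c). u div c) (zip (map (\<lambda>x. Omega_coeffs s z w x * x) ys) cs) = ys"
      unfolding cs_def using Omega_coeffs(1)[OF w(1)] ys(1) by (intro div) (simp add: Suc_le_eq)
    hence "F cs = w" using w(2) ys by (simp add: F_def Omega_composition_def ys_def)
    moreover have "cs \<in> C"
      using Omega_coeffs(1,2)[OF w(1)] ys w(2) by (auto simp: C_def cs_def Omega_composition_def ys_def)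
    ultimately show "w \<in> F ` C" by blast
  qed
  moreover have "finite C" unfolding C_def by (rule finite_lists_length_eq) simp
  ultimately have "card {w\<in>Omega s z. Omega_composition s z w = us} \<le> card C"
    using card_image_le order_trans card_mono finite_imageI by metis
  also have "card C = s ^ length us" unfolding C_def by (subst card_lists_length_eq) auto
  finally show ?thesis .
qed

lemma sum_small_Omega_le:
  assumes "0 \<le> \<alpha>" "1 \<le> s"
  shows "(\<Sum>w\<in>{w\<in>Omega s z. card w < s}. \<Prod>x\<in>w. real x powr (\<alpha> - 1))
       \<le> real (s ^ s) * real (s ^ s) * (\<Sum>r<s. composition_sum \<alpha> r z)"
proof -
  define R where "R = {w\<in>Omega s z. card w < s}"
  define U where "U = (\<Union>r<s. compositions r z)"
  define P where "P xs = (\<Prod>x\<leftarrow>xs. real x powr (\<alpha> - 1))" for xs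
  have "(\<Prod>x\<in>w. real x powr (\<alpha> - 1)) \<le> real s ^ s * P (Omega_composition s z w)" if "w \<in> R" for w
  proof -
    have w: "w \<in> Omega s z" "card w < s" using that by (auto simp: R_def)
    have "0 \<le> P (Omega_composition s z w)" unfolding P_def by (intro prod_list_nonneg) auto
    hence "real s ^ card w * P (Omega_composition s z w) \<le> real s ^ s * P (Omega_composition s z w)"
      using w assms(2) by (intro mult_right_mono power_increasing) auto
    with prod_powr_le_Omega_composition[OF assms(1) w(1)] show ?thesis by (simp add: P_def)
  qed
  hence "(\<Sum>w\<in>R. \<Prod>x\<in>w. real x powr (\<alpha> - 1)) \<le> (\<Sum>w\<in>R. real s ^ s * P (Omega_composition s z w))"
    by (rule sum_mono)
  also have "\<dots> = real s ^ s * (\<Sum>w\<in>R. P (Omega_composition s z w))"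
    by (simp add: sum_distrib_left)
  also have "(\<Sum>w\<in>R. P (Omega_composition s z w)) \<le> real (s ^ s) * (\<Sum>xs\<in>U. P xs)"
  proof (rule sum_comp_le_fiber_card_mult)
    show "Omega_composition s z ` R \<subseteq> U"
      using Omega_composition_mem_compositions by (force simp: R_def U_def)
    fix us assume "us \<in> Omega_composition s z ` R"
    hence "length us < s"
      using Omega_composition_mem_compositions by (force simp: R_def compositions_def)
    hence "s ^ length us \<le> s ^ s" using assms(2) by (intro power_increasing) auto
    moreover have "card {w\<in>R. Omega_composition s z w = us}
        \<le> card {w\<in>Omega s z. Omega_composition s z w = us}"
      by (intro card_mono) (auto simp: R_def finite_Omega)
    ultimately show "card {w\<in>R. Omega_composition s z w = us} \<le> s ^ s"
      using card_Omega_composition_fiber_le[of s z us] by linarith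
  qed (auto simp: R_def U_def P_def finite_Omega finite_compositions intro!: prod_list_nonneg)
  also have "(\<Sum>xs\<in>U. P xs) = (\<Sum>r<s. composition_sum \<alpha> r z)"
    unfolding U_def P_def composition_sum_eq_sum_compositions
    by (rule sum.UNION_disjoint) (simp_all add: finite_compositions, auto simp: compositions_def)
  finally show ?thesis using assms(2) by (simp add: R_def mult_left_mono mult.assoc)
qed

lemma sum_PE_Omega_eq:
  "(\<Sum>w\<in>Omega s z. PE s w)
     = (1 / real s) ^ s / fact s
         * (\<Sum>xs\<in>{xs\<in>compositions s z. distinct xs}. \<Prod>x\<leftarrow>xs. real x powr (1 / real s - 1))
       + (\<Sum>w\<in>{w\<in>Omega s z. card w < s}. PE s w)"
proof -
  have Omega_eq: "{w\<in>Omega s z. card w = s} \<union> {w\<in>Omega s z. card w < s} = Omega s z"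
    using card_le_if_mem_Omega by (auto simp: le_less)
  have "(\<Sum>w\<in>{w\<in>Omega s z. card w = s} \<union> {w\<in>Omega s z. card w < s}. PE s w)
      = (\<Sum>w\<in>{w\<in>Omega s z. card w = s}. PE s w) + (\<Sum>w\<in>{w\<in>Omega s z. card w < s}. PE s w)"
    by (rule sum.union_disjoint) (auto simp: finite_Omega)
  hence "(\<Sum>w\<in>Omega s z. PE s w)
      = (\<Sum>w\<in>{w\<in>Omega s z. card w = s}. PE s w) + (\<Sum>w\<in>{w\<in>Omega s z. card w < s}. PE s w)"
    unfolding Omega_eq .
  moreover have "(\<Sum>w\<in>{w\<in>Omega s z. card w = s}. PE s w)
      = (1 / real s) ^ s * (\<Sum>w\<in>{w\<in>Omega s z. card w = s}. \<Prod>x\<in>w. real x powr (1 / real s - 1))"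
    by (simp add: sum_distrib_left PE_eq mem_Omega_iff)
  ultimately show ?thesis by (simp add: sum_distinct_compositions)
qed

lemma PE_nonneg: "0 \<le> PE s w"
  by (simp add: PE_def prod_nonneg)

lemma PE_le_prod_powr:
  assumes "finite w" "1 \<le> s"
  shows "PE s w \<le> (\<Prod>x\<in>w. real x powr (1 / real s - 1))"
proof -
  have "(1 / real s) ^ card w \<le> 1" using assms(2) by (intro power_le_one) auto
  thus ?thesis using assms(1) by (simp add: PE_eq mult_left_le_one_le prod_nonneg)
qed

lemma composition_sum_eq_distinct_plus_nondistinct:
  "composition_sum \<alpha> k z
     = (\<Sum>xs\<in>{xs\<in>compositions k z. distinct xs}. \<Prod>x\<leftarrow>xs. real x powr (\<alpha> - 1))
       + (\<Sum>xs\<in>{xs\<in>compositions k z. \<not> distinct xs}. \<Prod>x\<leftarrow>xs. real x powr (\<alpha> - 1))"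
proof -
  have "{xs\<in>compositions k z. distinct xs} \<union> {xs\<in>compositions k z. \<not> distinct xs} = compositions k z"
    by auto
  moreover have "(\<Sum>xs\<in>{xs\<in>compositions k z. distinct xs} \<union> {xs\<in>compositions k z. \<not> distinct xs}.
        \<Prod>x\<leftarrow>xs. real x powr (\<alpha> - 1))
      = (\<Sum>xs\<in>{xs\<in>compositions k z. distinct xs}. \<Prod>x\<leftarrow>xs. real x powr (\<alpha> - 1))
        + (\<Sum>xs\<in>{xs\<in>compositions k z. \<not> distinct xs}. \<Prod>x\<leftarrow>xs. real x powr (\<alpha> - 1))"
    by (rule sum.union_disjoint) (auto simp: finite_compositions)
  ultimately show ?thesis by (simp add: composition_sum_eq_sum_compositions)
qed

lemma composition_sum_tendsto_Gamma_power:
  assumes "1 \<le> s"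
  shows "(\<lambda>z. composition_sum (1 / real s) s z) \<longlonglongrightarrow> Gamma (1 / real s) ^ s"
proof -
  have "(\<lambda>z. composition_sum (1 / real s) s z / real z powr (real s * (1 / real s) - 1))
      \<longlonglongrightarrow> Gamma (1 / real s) ^ s / Gamma (real s * (1 / real s))"
    using assms by (intro composition_sum_asymp) auto
  moreover have "\<forall>\<^sub>F z in sequentially. composition_sum (1 / real s) s z
      / real z powr (real s * (1 / real s) - 1) = composition_sum (1 / real s) s z"
    using eventually_ge_at_top[of "1::nat"] by eventually_elim (use assms in auto)
  ultimately have "(\<lambda>z. composition_sum (1 / real s) s z)
      \<longlonglongrightarrow> Gamma (1 / real s) ^ s / Gamma (real s * (1 / real s))"
    by (rule Lim_transform_eventually)
  thus ?thesis using assms by simp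
qed

lemma sum_small_Omega_tendsto_zero:
  assumes "1 \<le> s"
  shows "(\<lambda>z. \<Sum>w\<in>{w\<in>Omega s z. card w < s}. \<Prod>x\<in>w. real x powr (1 / real s - 1)) \<longlonglongrightarrow> 0"
proof (rule tendsto_sandwich[OF _ _ tendsto_const])
  have "(\<lambda>z. real (s ^ s) * real (s ^ s) * (\<Sum>r<s. composition_sum (1 / real s) r z))
      \<longlonglongrightarrow> real (s ^ s) * real (s ^ s) * (\<Sum>r<s. 0)"
    using assms by (intro tendsto_mult tendsto_const tendsto_sum composition_sum_tendsto_zero)
      (auto simp: field_simps)
  thus "(\<lambda>z. real (s ^ s) * real (s ^ s) * (\<Sum>r<s. composition_sum (1 / real s) r z)) \<longlonglongrightarrow> 0"
    by simp
  show "\<forall>\<^sub>F z in sequentially. (\<Sum>w\<in>{w\<in>Omega s z. card w < s}. \<Prod>x\<in>w. real x powr (1 / real s - 1))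
      \<le> real (s ^ s) * real (s ^ s) * (\<Sum>r<s. composition_sum (1 / real s) r z)"
    using assms by (intro always_eventually allI sum_small_Omega_le) auto
qed (auto intro!: always_eventually sum_nonneg prod_nonneg)

lemma sum_PE_Omega_bounds:
  fixes s z :: nat
  assumes "1 \<le> s"
  defines "c \<equiv> (1 / real s) ^ s / fact s"
    and "T \<equiv> composition_sum (1 / real s) s z"
    and "Q \<equiv> \<Sum>w\<in>{w\<in>Omega s z. card w < s}. \<Prod>x\<in>w. real x powr (1 / real s - 1)"
  shows "c * (T - real (s ^ s) * Q) \<le> (\<Sum>w\<in>Omega s z. PE s w)"
    and "(\<Sum>w\<in>Omega s z. PE s w) \<le> c * T + Q"
proof -
  define D where "D = (\<Sum>xs\<in>{xs\<in>compositions s z. distinct xs}. \<Prod>x\<leftarrow>xs. real x powr (1 / real s - 1))"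
  define N where "N = (\<Sum>xs\<in>{xs\<in>compositions s z. \<not> distinct xs}. \<Prod>x\<leftarrow>xs. real x powr (1 / real s - 1))"
  define R where "R = (\<Sum>w\<in>{w\<in>Omega s z. card w < s}. PE s w)"
  have "T = D + N"
    unfolding T_def D_def N_def by (rule composition_sum_eq_distinct_plus_nondistinct)
  moreover have "N \<le> real (s ^ s) * Q"
    unfolding N_def Q_def using assms by (intro sum_nondistinct_compositions_le) simp
  moreover have "0 \<le> N" unfolding N_def by (intro sum_nonneg prod_list_nonneg) auto
  ultimately have "T - real (s ^ s) * Q \<le> D" "D \<le> T" by linarith+
  moreover have "0 < c" using assms by (simp add: c_def)
  ultimately have "c * (T - real (s ^ s) * Q) \<le> c * D" "c * D \<le> c * T"
    by (simp_all add: mult_left_mono)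
  moreover have "0 \<le> R" "R \<le> Q"
    unfolding R_def Q_def using assms
    by (auto intro!: sum_nonneg sum_mono PE_nonneg PE_le_prod_powr simp: mem_Omega_iff)
  moreover have "(\<Sum>w\<in>Omega s z. PE s w) = c * D + R"
    unfolding sum_PE_Omega_eq c_def D_def R_def ..
  ultimately show "c * (T - real (s ^ s) * Q) \<le> (\<Sum>w\<in>Omega s z. PE s w)"
    and "(\<Sum>w\<in>Omega s z. PE s w) \<le> c * T + Q" by linarith+
qed

lemma sum_PE_Omega_tendsto:
  assumes "2 \<le> s"
  shows "(\<lambda>z. \<Sum>w\<in>Omega s z. PE s w) \<longlonglongrightarrow> lambda_s s"
proof -
  define c where "c = (1 / real s) ^ s / fact s"
  define T where "T = composition_sum (1 / real s) s"
  define Q where "Q z = (\<Sum>w\<in>{w\<in>Omega s z. card w < s}. \<Prod>x\<in>w. real x powr (1 / real s - 1))" for z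
  have T: "T \<longlonglongrightarrow> Gamma (1 / real s) ^ s"
    unfolding T_def using assms by (intro composition_sum_tendsto_Gamma_power) simp
  have Q: "Q \<longlonglongrightarrow> 0"
    unfolding Q_def using assms by (intro sum_small_Omega_tendsto_zero) simp
  have "(\<lambda>z. c * (T z - real (s ^ s) * Q z)) \<longlonglongrightarrow> c * Gamma (1 / real s) ^ s"
    using tendsto_mult[OF tendsto_const[of c] tendsto_diff[OF T tendsto_mult[OF tendsto_const Q]]]
    by simp
  moreover have "(\<lambda>z. c * T z + Q z) \<longlonglongrightarrow> c * Gamma (1 / real s) ^ s"
    using tendsto_add[OF tendsto_mult[OF tendsto_const[of c] T] Q] by simp
  ultimately have "(\<lambda>z. \<Sum>w\<in>Omega s z. PE s w) \<longlonglongrightarrow> c * Gamma (1 / real s) ^ s"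
    by (rule tendsto_sandwich[rotated 2])
      (use sum_PE_Omega_bounds[of s] assms
        in \<open>auto intro!: always_eventually simp: c_def T_def Q_def\<close>)
  thus ?thesis by (simp add: lambda_s_def c_def power_divide mult.commute)
qed

theorem lemma2:
  fixes s :: nat
  assumes "s \<ge> 2"
  shows "(\<lambda>z::nat. \<Sum>w\<in>Omega s z. PE s w) \<sim>[at_top] (\<lambda>_. lambda_s s)"
proof (rule tendsto_imp_asymp_equiv_const)
  show "(\<lambda>z. \<Sum>w\<in>Omega s z. PE s w) \<longlonglongrightarrow> lambda_s s"
    using assms by (rule sum_PE_Omega_tendsto)
  have "Gamma (1 / real s) > 0" using assms by (intro Gamma_real_pos) simp
  hence "Gamma (1 / real s) \<noteq> 0" by linarith
  thus "lambda_s s \<noteq> 0" using assms by (simp add: lambda_s_def)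
qed

end
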